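(* Let $n\geq 1$ and let $x=(x_1,\dots,x_n)\in B^n$ be such that every iterate $S^jx$, $j\geq0$, has strictly positive last coordinate and the expansion is eventually periodic: $S^{m+p}x=S^mx$ for some $m\geq0$, $p\geq1$. Let $k_j:=\lfloor 1/(S^{j-1}x)_n\rfloor$ and let the periodicity matrix be $\beta^{(p)}:=\beta(k_{m+1})\cdots\beta(k_{m+p})$. Let $\rho_0$ be the largest eigenvalue of $\beta^{(p)}$ (its spectral radius, a real positive eigenvalue since $\beta^{(p)}$ has nonnegative entries). Then $x_1,\dots,x_n$ are rational functions with rational coefficients of $\rho_0$; consequently $x_1,\dots,x_n$ lie in the number field $\mathbb{Q}(\rho_0)$, whose degree is at most $n+1$.
   Context: $B^n:=\{(x_1,\dots,x_n)\in\mathbb{R}^n:1\geq x_1\geq\dots\geq x_n\geq0\}$. The multiplicative Selmer algorithm is the map, defined for $x\in B^n$ with $x_n>0$, $S(x_1,\dots,x_n)=\left(\frac{x_2}{x_1},\dots,\frac{x_n}{x_1},\frac{1-kx_n}{x_1}\right)$ with $k=\lfloor x_n^{-1}\rfloor$. For $k\in\mathbb{N}$, $\beta(k)$ is the $(n+1)\times(n+1)$ integer matrix (indices $0,\dots,n$) with entries $\beta(k)_{0,n-1}=k$, $\beta(k)_{0,n}=1$, $\beta(k)_{i,i-1}=1$ for $1\leq i\leq n$, and all other entries $0$. *)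

theory Defs
  imports Complex_Main "HOL-Computational_Algebra.Polynomial" "Jordan_Normal_Form.Spectral_Radius"
begin

text \<open>Points of B^n are represented as functions x :: nat => real, using the
coordinates x 1, ..., x n (1-based, as in the paper); other indices are irrelevant.\<close>

definition in_B :: "nat \<Rightarrow> (nat \<Rightarrow> real) \<Rightarrow> bool" where
  "in_B n x \<longleftrightarrow> (n \<ge> 1 \<longrightarrow> x 1 \<le> 1) \<and> (\<forall>i. 1 \<le> i \<and> i < n \<longrightarrow> x (i+1) \<le> x i)
      \<and> (n \<ge> 1 \<longrightarrow> 0 \<le> x n)"

definition selmer_digit :: "nat \<Rightarrow> (nat \<Rightarrow> real) \<Rightarrow> int" where
  "selmer_digit n x = \<lfloor>1 / x n\<rfloor>"

definition selmer :: "nat \<Rightarrow> (nat \<Rightarrow> real) \<Rightarrow> (nat \<Rightarrow> real)" where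
  "selmer n x = (\<lambda>i. if 1 \<le> i \<and> i < n then x (i+1) / x 1
      else if i = n then (1 - of_int (selmer_digit n x) * x n) / x 1 else 0)"

definition beta_mat :: "nat \<Rightarrow> int \<Rightarrow> int mat" where
  "beta_mat n k = mat (n+1) (n+1) (\<lambda>(i,j).
      if i = 0 \<and> j = n - 1 then k
      else if i = 0 \<and> j = n then 1
      else if 1 \<le> i \<and> j + 1 = i then 1 else 0)"

definition period_mat :: "nat \<Rightarrow> (nat \<Rightarrow> real) \<Rightarrow> nat \<Rightarrow> nat \<Rightarrow> int mat" where
  "period_mat n x m p = foldr (\<lambda>j M. beta_mat n (selmer_digit n ((selmer n ^^ (j - 1)) x)) * M)
      [m+1..<m+p+1] (1\<^sub>m (n+1))"

end

theory Submission
  imports Defs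
begin

text \<open>In homogeneous coordinates one Selmer step reads (1, y) = y_1 \<beta>(k) (1, S y), so
  periodicity makes (1, S^m x) a positive eigenvector of the periodicity matrix, with some
  eigenvalue \<rho> > 0. Comparing any eigenvector with the positive one bounds all eigenvalues by
  \<rho>, so \<rho> = \<rho>_0. Since the digits are at least 1, the support graph of every \<beta>(k) contains
  cycles of the coprime lengths n and n + 1 through 0; positivity therefore spreads to all
  coordinates, and the \<rho>-eigenspace is a line. Gaussian elimination over \<rat>(\<rho>) produces an
  eigenvector with coordinates in \<rat>(\<rho>), which must be (1, S^m x); pulling back through the
  preperiod gives x. Finally \<rho> is a root of the characteristic polynomial of the integer
  periodicity matrix.\<close>

section \<open>Subfields and linear systems\<close>

locale subfield_set =
  fixes K :: "'a::field set"
  assumes one_mem: "1 \<in> K"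
    and diff_mem: "a \<in> K \<Longrightarrow> b \<in> K \<Longrightarrow> a - b \<in> K"
    and mult_mem: "a \<in> K \<Longrightarrow> b \<in> K \<Longrightarrow> a * b \<in> K"
    and divide_mem: "a \<in> K \<Longrightarrow> b \<in> K \<Longrightarrow> a / b \<in> K"
begin

lemma zero_mem: "0 \<in> K"
  using diff_mem[OF one_mem one_mem] by simp

lemma add_mem:
  assumes "a \<in> K" "b \<in> K" shows "a + b \<in> K"
  using diff_mem[OF assms(1) diff_mem[OF zero_mem assms(2)]] by simp

lemma sum_mem: "(\<And>j. j \<in> A \<Longrightarrow> f j \<in> K) \<Longrightarrow> sum f A \<in> K"
  by (induction A rule: infinite_finite_induct) (auto intro: zero_mem add_mem)

lemma of_nat_mem: "of_nat k \<in> K"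
  by (induction k) (auto intro: zero_mem add_mem one_mem)

lemma of_int_mem: "of_int k \<in> K"
proof -
  have "(of_int k :: 'a) = of_nat (nat k) - of_nat (nat (- k))"
    by (cases "k \<ge> 0") auto
  then show ?thesis using diff_mem[OF of_nat_mem of_nat_mem] by simp
qed

end

definition solves :: "nat \<Rightarrow> ((nat \<Rightarrow> 'a::comm_ring) \<times> 'a) set \<Rightarrow> (nat \<Rightarrow> 'a) \<Rightarrow> bool" where
  "solves N E u \<longleftrightarrow> (\<forall>e\<in>E. (\<Sum>j<N. fst e j * u j) = snd e)"

definition eliminate :: "nat \<Rightarrow> (nat \<Rightarrow> 'a::field) \<times> 'a \<Rightarrow> (nat \<Rightarrow> 'a) \<times> 'a \<Rightarrow> (nat \<Rightarrow> 'a) \<times> 'a" where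
  "eliminate N e0 e = (\<lambda>j. fst e j - fst e N / fst e0 N * fst e0 j, snd e - fst e N / fst e0 N * snd e0)"

lemma solves_eliminate:
  assumes "(a0, b0) \<in> E" "a0 N \<noteq> 0" "solves (Suc N) E u"
  shows "solves N (eliminate N (a0, b0) ` E) u"
  unfolding solves_def
proof
  fix e assume "e \<in> eliminate N (a0, b0) ` E"
  then obtain a b where "(a, b) \<in> E" and e: "e = eliminate N (a0, b0) (a, b)" by force
  then have ea: "(\<Sum>j<N. a j * u j) + a N * u N = b" and eb: "(\<Sum>j<N. a0 j * u j) + a0 N * u N = b0"
    using assms(1,3) unfolding solves_def by force+
  have "(\<Sum>j<N. fst e j * u j) = (\<Sum>j<N. a j * u j) - a N / a0 N * (\<Sum>j<N. a0 j * u j)"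
    unfolding e by (simp add: eliminate_def algebra_simps sum_subtractf sum_distrib_left)
  also have "\<dots> = b - a N / a0 N * b0"
    using assms(2) unfolding ea[symmetric] eb[symmetric] by (simp add: field_simps)
  finally show "(\<Sum>j<N. fst e j * u j) = snd e" unfolding e by (simp add: eliminate_def)
qed

lemma solves_extend:
  assumes "a0 N \<noteq> 0" "solves N (eliminate N (a0, b0) ` E) u"
  shows "solves (Suc N) E (u(N := (b0 - (\<Sum>j<N. a0 j * u j)) / a0 N))"
  unfolding solves_def
proof
  fix e assume "e \<in> E"
  obtain a b where e: "e = (a, b)" by force
  have "(\<Sum>j<N. (a j - a N / a0 N * a0 j) * u j) = b - a N / a0 N * b0"
    using assms(2) \<open>e \<in> E\<close> unfolding solves_def e by (force simp: eliminate_def)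
  then have "(\<Sum>j<N. a j * u j) - a N / a0 N * (\<Sum>j<N. a0 j * u j) = b - a N / a0 N * b0"
    by (simp add: algebra_simps sum_subtractf sum_distrib_left)
  moreover have "(\<Sum>j<N. a j * (u(N := t)) j) = (\<Sum>j<N. a j * u j)" for t
    by (intro sum.cong) auto
  ultimately show "(\<Sum>j<Suc N. fst e j * (u(N := (b0 - (\<Sum>j<N. a0 j * u j)) / a0 N)) j) = snd e"
    using assms(1) unfolding e by (simp add: field_simps)
qed

lemma solves_Un_image:
  "solves N (f ` A \<union> B) u \<longleftrightarrow> (\<forall>i\<in>A. (\<Sum>j<N. fst (f i) j * u j) = snd (f i)) \<and> solves N B u"
  by (auto simp: solves_def)

lemma solves_singleton: "solves N {e} u \<longleftrightarrow> (\<Sum>j<N. fst e j * u j) = snd e"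
  by (simp add: solves_def)

context subfield_set
begin

lemma solves_in_subfield:
  assumes "\<forall>e\<in>E. (\<forall>j<N. fst e j \<in> K) \<and> snd e \<in> K" "solves N E u"
  shows "\<exists>u'. range u' \<subseteq> K \<and> solves N E u'"
  using assms
proof (induction N arbitrary: E u)
  case 0
  then show ?case using zero_mem by (intro exI[of _ "\<lambda>_. 0"]) (auto simp: solves_def)
next
  case (Suc N)
  show ?case
  proof (cases "\<exists>e\<in>E. fst e N \<noteq> 0")
    case True
    then obtain a0 b0 where e0: "(a0, b0) \<in> E" "a0 N \<noteq> 0" by force
    have a0K: "\<forall>j<Suc N. a0 j \<in> K" "b0 \<in> K" using Suc.prems(1) e0(1) by force+
    have "\<forall>e\<in>eliminate N (a0, b0) ` E. (\<forall>j<N. fst e j \<in> K) \<and> snd e \<in> K"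
      using Suc.prems(1) a0K by (simp add: eliminate_def diff_mem mult_mem divide_mem)
    then obtain u' where u'K: "range u' \<subseteq> K" and u': "solves N (eliminate N (a0, b0) ` E) u'"
      using Suc.IH solves_eliminate[OF e0 Suc.prems(2)] by blast
    define t where "t = (b0 - (\<Sum>j<N. a0 j * u' j)) / a0 N"
    have "t \<in> K"
      unfolding t_def using a0K u'K by (auto intro!: divide_mem diff_mem sum_mem mult_mem)
    then have "range (u'(N := t)) \<subseteq> K" using u'K by auto
    with solves_extend[OF e0(2) u'] show ?thesis unfolding t_def by blast
  next
    case False
    then have same: "solves N E u' \<longleftrightarrow> solves (Suc N) E u'" for u'
      by (simp add: solves_def)
    have "\<forall>e\<in>E. (\<forall>j<N. fst e j \<in> K) \<and> snd e \<in> K" using Suc.prems(1) by simp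
    then obtain u' where "range u' \<subseteq> K" "solves N E u'"
      using Suc.IH Suc.prems(2) same by blast
    then show ?thesis using same by blast
  qed
qed

lemma eigenvector_in_subfield:
  fixes n :: nat
  assumes "\<forall>i\<le>n. \<forall>j\<le>n. c i j \<in> K" "\<mu> \<in> K"
    and "\<forall>i\<le>n. (\<Sum>j\<le>n. c i j * u j) = \<mu> * u i" "u 0 = 1"
  shows "\<exists>u'. range u' \<subseteq> K \<and> (\<forall>i\<le>n. (\<Sum>j\<le>n. c i j * u' j) = \<mu> * u' i) \<and> u' 0 = 1"
proof -
  define r where "r i j = c i j - (if j = i then \<mu> else 0)" for i j
  define \<delta> :: "nat \<Rightarrow> 'a" where "\<delta> j = (if j = 0 then 1 else 0)" for j
  define E :: "((nat \<Rightarrow> 'a) \<times> 'a) set" where "E = (\<lambda>i. (r i, 0)) ` {..n} \<union> {(\<delta>, 1)}"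
  have row: "(\<Sum>j<Suc n. r i j * w j) = (\<Sum>j\<le>n. c i j * w j) - \<mu> * w i" if "i \<le> n" for i w
  proof -
    have "(\<Sum>j<Suc n. r i j * w j) = (\<Sum>j\<le>n. c i j * w j - (if j = i then \<mu> * w j else 0))"
      unfolding lessThan_Suc_atMost r_def by (intro sum.cong) (auto simp: algebra_simps)
    then show ?thesis using that by (simp add: sum_subtractf)
  qed
  have delta_sum: "(\<Sum>j<Suc n. \<delta> j * w j) = w 0" for w
  proof -
    have "(\<Sum>j<Suc n. \<delta> j * w j) = (\<Sum>j<Suc n. if j = 0 then w j else 0)"
      by (rule sum.cong) (simp_all add: \<delta>_def)
    then show ?thesis by (simp only: sum.delta) simp
  qed
  have solves_E: "solves (Suc n) E w \<longleftrightarrow> (\<forall>i\<le>n. (\<Sum>j\<le>n. c i j * w j) = \<mu> * w i) \<and> w 0 = 1" for w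
  proof -
    have "solves (Suc n) E w \<longleftrightarrow> (\<forall>i\<le>n. (\<Sum>j<Suc n. r i j * w j) = 0) \<and> (\<Sum>j<Suc n. \<delta> j * w j) = 1"
      unfolding E_def solves_Un_image solves_singleton by (simp only: Ball_def atMost_iff fst_conv snd_conv)
    also have "\<dots> \<longleftrightarrow> (\<forall>i\<le>n. (\<Sum>j\<le>n. c i j * w j) = \<mu> * w i) \<and> w 0 = 1"
      by (simp only: row delta_sum right_minus_eq cong: imp_cong)
    finally show ?thesis .
  qed
  have "\<forall>e\<in>E. (\<forall>j<Suc n. fst e j \<in> K) \<and> snd e \<in> K"
    using assms(1,2) by (simp add: E_def r_def \<delta>_def less_Suc_eq_le zero_mem one_mem diff_mem)
  moreover have "solves (Suc n) E u" using solves_E assms(3,4) by simp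
  ultimately obtain u' where "range u' \<subseteq> K" "solves (Suc n) E u'"
    using solves_in_subfield by blast
  then show ?thesis using solves_E[of u'] by blast
qed

end

definition rat_adjoin :: "'a::field_char_0 \<Rightarrow> 'a set" where
  "rat_adjoin \<rho> = {poly (map_poly of_rat P) \<rho> / poly (map_poly of_rat Q) \<rho> | P Q.
      poly (map_poly of_rat Q) \<rho> \<noteq> 0}"

lemma mem_rat_adjoin_iff:
  "a \<in> rat_adjoin \<rho> \<longleftrightarrow> (\<exists>P Q. poly (map_poly of_rat Q) \<rho> \<noteq> 0 \<and>
      a = poly (map_poly of_rat P) \<rho> / poly (map_poly of_rat Q) \<rho>)"
  unfolding rat_adjoin_def by auto

lemma rat_adjoin_self: "\<rho> \<in> rat_adjoin \<rho>"
  unfolding rat_adjoin_def by (intro CollectI exI[of _ "[:0, 1:]"] exI[of _ 1]) simp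

lemma subfield_set_rat_adjoin: "subfield_set (rat_adjoin \<rho>)"
proof -
  interpret h: map_poly_comm_ring_hom "of_rat :: rat \<Rightarrow> 'a" ..
  have poly_mult: "poly (map_poly of_rat (P * Q)) \<rho> = poly (map_poly of_rat P) \<rho> * poly (map_poly of_rat Q) \<rho>"
    for P Q :: "rat poly"
    by (simp add: h.hom_mult)
  have poly_diff: "poly (map_poly of_rat (P - Q)) \<rho> = poly (map_poly of_rat P) \<rho> - poly (map_poly of_rat Q) \<rho>"
    for P Q :: "rat poly"
    by (simp add: h.hom_minus)
  show ?thesis
  proof
    show "1 \<in> rat_adjoin \<rho>"
      unfolding rat_adjoin_def by (intro CollectI exI[of _ 1]) simp
    fix a b assume "a \<in> rat_adjoin \<rho>" "b \<in> rat_adjoin \<rho>"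
    then obtain P1 Q1 P2 Q2 where
      Q: "poly (map_poly of_rat Q1) \<rho> \<noteq> 0" "poly (map_poly of_rat Q2) \<rho> \<noteq> 0" and
      ab: "a = poly (map_poly of_rat P1) \<rho> / poly (map_poly of_rat Q1) \<rho>"
          "b = poly (map_poly of_rat P2) \<rho> / poly (map_poly of_rat Q2) \<rho>"
      unfolding rat_adjoin_def by blast
    show "a - b \<in> rat_adjoin \<rho>"
      unfolding rat_adjoin_def
      by (intro CollectI exI[of _ "P1 * Q2 - P2 * Q1"] exI[of _ "Q1 * Q2"])
        (use Q ab in \<open>simp add: poly_mult poly_diff diff_divide_distrib\<close>)
    show "a * b \<in> rat_adjoin \<rho>"
      unfolding rat_adjoin_def
      by (intro CollectI exI[of _ "P1 * P2"] exI[of _ "Q1 * Q2"]) (use Q ab in \<open>simp add: poly_mult\<close>)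
    show "a / b \<in> rat_adjoin \<rho>"
    proof (cases "poly (map_poly of_rat P2) \<rho> = 0")
      case True
      then show ?thesis
        unfolding rat_adjoin_def by (intro CollectI exI[of _ 0] exI[of _ 1]) (simp add: ab)
    next
      case False
      then show ?thesis
        unfolding rat_adjoin_def
        by (intro CollectI exI[of _ "P1 * Q2"] exI[of _ "Q1 * P2"]) (use Q ab in \<open>simp add: poly_mult\<close>)
    qed
  qed
qed

lemma int_mat_eigenvalue_rat_root:
  fixes A :: "int mat"
  assumes A: "A \<in> carrier_mat N N" and ev: "eigenvalue (map_mat real_of_int A) \<mu>"
  shows "\<exists>q :: rat poly. q \<noteq> 0 \<and> degree q \<le> N \<and> poly (map_poly of_rat q) \<mu> = 0"
proof -
  define q where "q = char_poly (map_mat (of_int :: int \<Rightarrow> rat) A)"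
  have QA: "map_mat (of_int :: int \<Rightarrow> rat) A \<in> carrier_mat N N" using A by simp
  have "map_poly of_rat q = char_poly (map_mat of_rat (map_mat (of_int :: int \<Rightarrow> rat) A))"
    unfolding q_def by (rule of_rat_hom.char_poly_hom[OF QA, symmetric])
  also have "map_mat of_rat (map_mat (of_int :: int \<Rightarrow> rat) A) = map_mat real_of_int A"
    by (rule eq_matI) (auto simp: of_rat_of_int_eq)
  finally have "poly (map_poly of_rat q) \<mu> = 0"
    using eigenvalue_root_char_poly[of "map_mat real_of_int A" N] A ev by simp
  moreover have "degree q = N" "coeff q N = 1"
    using degree_monic_char_poly[OF QA] unfolding q_def by auto
  ultimately show ?thesis by (intro exI[of _ q]) auto
qed

section \<open>The matrices \<open>\<beta>(k)\<close> acting on vectors indexed by \<open>0..n\<close>\<close>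

definition beta_act :: "nat \<Rightarrow> 'a::comm_ring_1 \<Rightarrow> (nat \<Rightarrow> 'a) \<Rightarrow> nat \<Rightarrow> 'a" where
  "beta_act n k z = (\<lambda>i. if i = 0 then k * z (n - 1) + z n else if i \<le> n then z (i - 1) else 0)"

definition beta_prod :: "nat \<Rightarrow> int list \<Rightarrow> int mat" where
  "beta_prod n ks = foldr (\<lambda>k M. beta_mat n k * M) ks (1\<^sub>m (n + 1))"

definition beta_prod_act :: "nat \<Rightarrow> int list \<Rightarrow> (nat \<Rightarrow> 'a::comm_ring_1) \<Rightarrow> nat \<Rightarrow> 'a" where
  "beta_prod_act n ks = foldr (\<lambda>k. beta_act n (of_int k)) ks"

lemma beta_prod_Nil [simp]: "beta_prod n [] = 1\<^sub>m (n + 1)"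
  and beta_prod_Cons [simp]: "beta_prod n (k # ks) = beta_mat n k * beta_prod n ks"
  by (simp_all add: beta_prod_def)

lemma beta_prod_act_Nil [simp]: "beta_prod_act n [] z = z"
  and beta_prod_act_Cons [simp]:
    "beta_prod_act n (k # ks) z = beta_act n (of_int k) (beta_prod_act n ks z)"
  by (simp_all add: beta_prod_act_def)

lemma beta_mat_carrier [simp]: "beta_mat n k \<in> carrier_mat (Suc n) (Suc n)"
  by (simp add: beta_mat_def)

lemma beta_prod_carrier [simp]: "beta_prod n ks \<in> carrier_mat (Suc n) (Suc n)"
proof (induction ks)
  case (Cons k ks)
  then show ?case using mult_carrier_mat[OF beta_mat_carrier[of n k]] by simp
qed simp

lemma mult_beta_mat_vec:
  assumes n: "n \<ge> 1"
  shows "map_mat of_int (beta_mat n k) *\<^sub>v vec (n + 1) z = vec (n + 1) (beta_act n (of_int k) z)"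
proof (rule eq_vecI)
  fix i assume "i < dim_vec (vec (n + 1) (beta_act n (of_int k) z))"
  then have i: "i < n + 1" by simp
  have "(map_mat of_int (beta_mat n k) *\<^sub>v vec (n + 1) z) $ i = (\<Sum>j<n+1. of_int (beta_mat n k $$ (i, j)) * z j)"
    using i by (simp add: scalar_prod_def beta_mat_def lessThan_atLeast0)
  also have "\<dots> = (\<Sum>j<n+1. if i = 0 then (if j = n - 1 then of_int k * z j else 0) + (if j = n then z j else 0)
      else if j + 1 = i then z j else 0)"
    using n i by (intro sum.cong refl) (auto simp: beta_mat_def)
  also have "\<dots> = beta_act n (of_int k) z i"
  proof (cases "i = 0")
    case True
    then show ?thesis using n by (simp add: beta_act_def sum.distrib)
  next
    case False
    then have "(\<Sum>j<n+1. if j + 1 = i then z j else 0) = (\<Sum>j<n+1. if j = i - 1 then z j else 0)"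
      by (intro sum.cong) auto
    then show ?thesis using False i by (simp add: beta_act_def)
  qed
  finally show "(map_mat of_int (beta_mat n k) *\<^sub>v vec (n + 1) z) $ i = vec (n + 1) (beta_act n (of_int k) z) $ i"
    using i by simp
qed (simp add: beta_mat_def)

lemma mult_beta_prod_vec:
  assumes n: "n \<ge> 1"
  shows "map_mat of_int (beta_prod n ks) *\<^sub>v vec (n + 1) z = vec (n + 1) (beta_prod_act n ks z)"
proof (induction ks)
  case Nil
  show ?case by (simp add: of_int_hom.mat_hom_one)
next
  case (Cons k ks)
  have hom: "map_mat of_int (beta_prod n (k # ks)) = map_mat of_int (beta_mat n k) * map_mat of_int (beta_prod n ks)"
    by (simp add: of_int_hom.mat_hom_mult[OF beta_mat_carrier beta_prod_carrier])
  have "map_mat of_int (beta_prod n (k # ks)) *\<^sub>v vec (n + 1) z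
      = (map_mat of_int (beta_mat n k) * map_mat of_int (beta_prod n ks)) *\<^sub>v vec (n + 1) z"
    unfolding hom ..
  also have "\<dots> = map_mat of_int (beta_mat n k) *\<^sub>v (map_mat of_int (beta_prod n ks) *\<^sub>v vec (n + 1) z)"
    by (rule assoc_mult_mat_vec[of _ "n + 1" "n + 1" _ "n + 1"]) auto
  finally show ?case using Cons.IH mult_beta_mat_vec[OF n] by simp
qed

lemma beta_prod_act_eq_sum:
  assumes "n \<ge> 1" "i \<le> n"
  shows "beta_prod_act n ks z i = (\<Sum>j\<le>n. of_int (beta_prod n ks $$ (i, j)) * z j)"
proof -
  have "beta_prod_act n ks z i = (map_mat of_int (beta_prod n ks) *\<^sub>v vec (n + 1) z) $ i"
    unfolding mult_beta_prod_vec[OF assms(1)] using assms(2) by simp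
  also have "\<dots> = row (map_mat of_int (beta_prod n ks)) i \<bullet> vec (n + 1) z"
    using assms carrier_matD[OF beta_prod_carrier[of n ks]] by simp
  also have "\<dots> = (\<Sum>j\<le>n. of_int (beta_prod n ks $$ (i, j)) * z j)"
    unfolding scalar_prod_def using assms carrier_matD[OF beta_prod_carrier[of n ks]]
    by (intro sum.cong) auto
  finally show ?thesis .
qed

lemma eigenvector_beta_prod_vec:
  assumes "n \<ge> 1"
  shows "eigenvector (map_mat of_int (beta_prod n ks)) (vec (n + 1) f) \<mu>
    \<longleftrightarrow> (\<exists>i\<le>n. f i \<noteq> 0) \<and> (\<forall>i\<le>n. beta_prod_act n ks f i = \<mu> * f i)"
proof -
  have "vec (n + 1) f \<noteq> 0\<^sub>v (n + 1) \<longleftrightarrow> (\<exists>i\<le>n. f i \<noteq> 0)"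
    by (auto simp: vec_eq_iff less_Suc_eq_le)
  moreover have "vec (n + 1) (beta_prod_act n ks f) = \<mu> \<cdot>\<^sub>v vec (n + 1) f
      \<longleftrightarrow> (\<forall>i\<le>n. beta_prod_act n ks f i = \<mu> * f i)"
    by (auto simp: vec_eq_iff less_Suc_eq_le)
  ultimately show ?thesis
    unfolding eigenvector_def mult_beta_prod_vec[OF assms]
    by (simp add: carrier_matD[OF beta_prod_carrier])
qed

lemma beta_prod_eigenvalue_rat_root:
  fixes v :: "nat \<Rightarrow> real"
  assumes "n \<ge> 1" "\<forall>i\<le>n. beta_prod_act n ks v i = \<rho> * v i" "v 0 \<noteq> 0"
  shows "\<exists>q :: rat poly. q \<noteq> 0 \<and> degree q \<le> n + 1 \<and> poly (map_poly of_rat q) \<rho> = 0"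
proof -
  have "eigenvector (map_mat real_of_int (beta_prod n ks)) (vec (n + 1) v) \<rho>"
    unfolding eigenvector_beta_prod_vec[OF assms(1)] using assms(2,3) by auto
  then have "eigenvalue (map_mat real_of_int (beta_prod n ks)) \<rho>" unfolding eigenvalue_def by blast
  from int_mat_eigenvalue_rat_root[OF beta_prod_carrier this] show ?thesis by simp
qed

lemma beta_act_scale: "beta_act n k (\<lambda>i. c * z i) = (\<lambda>i. c * beta_act n k z i)"
  by (auto simp: beta_act_def algebra_simps)

lemma beta_prod_act_scale:
  "beta_prod_act n ks (\<lambda>i. c * z i) = (\<lambda>i. c * beta_prod_act n ks z i)"
  by (induction ks) (auto simp: beta_act_scale)

lemma beta_prod_act_diff:
  "beta_prod_act n ks (\<lambda>i. a i - b i) = (\<lambda>i. beta_prod_act n ks a i - beta_prod_act n ks b i)"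
  by (induction ks) (auto simp: beta_act_def algebra_simps)

lemma beta_prod_act_of_real:
  "beta_prod_act n ks (\<lambda>i. of_real (v i) :: 'a::{real_algebra_1, comm_ring_1}) = (\<lambda>i. of_real (beta_prod_act n ks v i))"
  by (induction ks) (auto simp: beta_act_def)

lemma (in subfield_set) beta_prod_act_mem:
  "\<forall>i\<le>n. z i \<in> K \<Longrightarrow> \<forall>i\<le>n. beta_prod_act n ks z i \<in> K"
  by (induction ks) (auto simp: beta_act_def intro!: add_mem mult_mem of_int_mem zero_mem)

section \<open>Positivity and the dominant eigenvalue\<close>

lemma beta_prod_act_nonneg:
  "\<forall>k\<in>set ks. k \<ge> 0 \<Longrightarrow> \<forall>i\<le>n. (0::real) \<le> z i \<Longrightarrow> \<forall>i\<le>n. 0 \<le> beta_prod_act n ks z i"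
  by (induction ks) (auto simp: beta_act_def)

lemma beta_prod_act_norm_le:
  fixes u :: "nat \<Rightarrow> 'a::real_normed_field"
  assumes "\<forall>k\<in>set ks. k \<ge> 0" and "\<forall>i\<le>n. norm (u i) \<le> w i"
  shows "\<forall>i\<le>n. norm (beta_prod_act n ks u i) \<le> beta_prod_act n ks w i"
  using assms(1)
proof (induction ks)
  case Nil then show ?case using assms(2) by simp
next
  case (Cons k ks)
  let ?u = "beta_prod_act n ks u" and ?w = "beta_prod_act n ks w"
  have "norm (of_int k * ?u (n - 1) + ?u n) \<le> of_int k * ?w (n - 1) + ?w n"
  proof -
    have "norm (of_int k * ?u (n - 1) + ?u n) \<le> of_int k * norm (?u (n - 1)) + norm (?u n)"
      using Cons.prems norm_triangle_ineq[of "of_int k * ?u (n - 1)" "?u n"] by (simp add: norm_mult)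
    also have "\<dots> \<le> of_int k * ?w (n - 1) + ?w n"
      using Cons by (intro add_mono mult_left_mono) auto
    finally show ?thesis .
  qed
  then show ?case using Cons by (auto simp: beta_act_def)
qed

lemma beta_prod_eigenvalue_norm_le:
  fixes u :: "nat \<Rightarrow> 'a::real_normed_field"
  assumes ks: "\<forall>k\<in>set ks. k \<ge> 0" and v: "\<forall>i\<le>n. v i > 0"
    and ev: "\<forall>i\<le>n. beta_prod_act n ks v i = \<rho> * v i"
    and eu: "\<forall>i\<le>n. beta_prod_act n ks u i = \<mu> * u i" and i1: "i1 \<le> n" "u i1 \<noteq> 0"
  shows "norm \<mu> \<le> \<rho>"
proof -
  define r where "r = Max ((\<lambda>i. norm (u i) / v i) ` {..n})"
  have r_ge: "norm (u i) / v i \<le> r" if "i \<le> n" for i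
    unfolding r_def using that by simp
  have "r \<in> (\<lambda>i. norm (u i) / v i) ` {..n}"
    unfolding r_def by (intro Max_in) auto
  then obtain i0 where i0: "i0 \<le> n" "r = norm (u i0) / v i0" by auto
  have "0 < norm (u i1) / v i1" using i1 v by simp
  then have "r > 0" using r_ge[OF i1(1)] by simp
  have u_le: "\<forall>i\<le>n. norm (u i) \<le> r * v i"
    using r_ge v by (simp add: divide_le_eq)
  have u_i0: "norm (u i0) = r * v i0" using i0 v[rule_format, OF i0(1)] by simp
  have "norm \<mu> * (r * v i0) = norm (beta_prod_act n ks u i0)"
    using eu i0(1) by (simp add: norm_mult u_i0)
  also have "\<dots> \<le> beta_prod_act n ks (\<lambda>i. r * v i) i0"
    using beta_prod_act_norm_le[OF ks u_le] i0(1) by simp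
  also have "\<dots> = \<rho> * (r * v i0)" using ev i0(1) by (simp add: beta_prod_act_scale)
  finally show ?thesis using \<open>r > 0\<close> v i0(1) by simp
qed

lemma spectral_radius_beta_prod:
  assumes n: "n \<ge> 1" and ks: "\<forall>k\<in>set ks. k \<ge> 0" and v: "\<forall>i\<le>n. v i > 0" and "\<rho> \<ge> 0"
    and ev: "\<forall>i\<le>n. beta_prod_act n ks v i = \<rho> * v i"
  shows "spectral_radius (map_mat of_int (beta_prod n ks)) = \<rho>"
proof -
  define A where "A = map_mat complex_of_int (beta_prod n ks)"
  have A: "A \<in> carrier_mat (n + 1) (n + 1)" unfolding A_def by simp
  have "eigenvector A (vec (n + 1) (\<lambda>i. of_real (v i))) (of_real \<rho>)"
    unfolding A_def eigenvector_beta_prod_vec[OF n] beta_prod_act_of_real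
    using v ev by (intro conjI exI[of _ 0]) auto
  then have "of_real \<rho> \<in> spectrum A" unfolding spectrum_def eigenvalue_def by auto
  then have "\<rho> \<le> spectral_radius A" using spectral_radius_mem_max(2)[OF A] \<open>\<rho> \<ge> 0\<close> by force
  moreover have "norm \<mu> \<le> \<rho>" if \<mu>: "\<mu> \<in> spectrum A" for \<mu>
  proof -
    obtain u where "eigenvector A u \<mu>" using \<mu> unfolding spectrum_def eigenvalue_def by auto
    moreover have "u = vec (n + 1) (\<lambda>i. u $ i)" if "u \<in> carrier_vec (n + 1)"
      using that by (intro eq_vecI) auto
    ultimately have "eigenvector A (vec (n + 1) (\<lambda>i. u $ i)) \<mu>"
      using A unfolding eigenvector_def by auto
    then show ?thesis
      unfolding A_def eigenvector_beta_prod_vec[OF n]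
      using beta_prod_eigenvalue_norm_le[OF ks v ev] by auto
  qed
  then have "spectral_radius A \<le> \<rho>" using spectral_radius_mem_max(1)[OF A] by auto
  ultimately show ?thesis unfolding A_def by simp
qed

text \<open>b \<rightarrow> c is an edge iff the entry (c, b) of \<beta>(k) is positive, for every k \<ge> 1.\<close>
definition beta_edge :: "nat \<Rightarrow> nat \<Rightarrow> nat \<Rightarrow> bool" where
  "beta_edge n b c \<longleftrightarrow> (b < n \<and> c = b + 1) \<or> (b = n \<and> c = 0) \<or> (b = n - 1 \<and> c = 0)"

inductive beta_walk :: "nat \<Rightarrow> nat \<Rightarrow> nat \<Rightarrow> nat \<Rightarrow> bool" for n where
  Nil: "beta_walk n 0 a a"
| snoc: "beta_walk n L a b \<Longrightarrow> beta_edge n b c \<Longrightarrow> beta_walk n (Suc L) a c"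

inductive_cases beta_walk_0E: "beta_walk n 0 a b"
inductive_cases beta_walk_SucE: "beta_walk n (Suc L) a c"

lemma beta_walk_le: "beta_walk n L a b \<Longrightarrow> a \<le> n \<Longrightarrow> b \<le> n"
  by (induction rule: beta_walk.induct) (auto simp: beta_edge_def)

lemma beta_walk_append: "beta_walk n L2 b c \<Longrightarrow> beta_walk n L1 a b \<Longrightarrow> beta_walk n (L1 + L2) a c"
  by (induction rule: beta_walk.induct) (auto intro: beta_walk.intros)

lemma beta_walk_split: "beta_walk n (L1 + L2) a c \<Longrightarrow> \<exists>b. beta_walk n L1 a b \<and> beta_walk n L2 b c"
proof (induction L2 arbitrary: c)
  case 0 then show ?case by (auto intro: beta_walk.intros)
next
  case (Suc L2)
  then obtain b' where "beta_walk n (L1 + L2) a b'" "beta_edge n b' c"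
    by (auto elim: beta_walk_SucE)
  with Suc.IH show ?case by (blast intro: beta_walk.intros)
qed

lemma beta_walk_ascending: "a + j \<le> n \<Longrightarrow> beta_walk n j a (a + j)"
  by (induction j) (auto intro: beta_walk.intros simp: beta_edge_def)

lemma beta_walk_cycles:
  assumes "n \<ge> 1" shows "beta_walk n (s * n + t * (n + 1)) 0 0"
proof -
  have short: "beta_walk n n 0 0"
    using beta_walk.snoc[OF beta_walk_ascending[of 0 "n - 1" n], of 0] assms
    by (simp add: beta_edge_def)
  have long: "beta_walk n (n + 1) 0 0"
    using beta_walk.snoc[OF beta_walk_ascending[of 0 n n], of 0] by (simp add: beta_edge_def)
  have "beta_walk n (t * (n + 1)) 0 0"
  proof (induction t)
    case (Suc t)
    from beta_walk_append[OF long this] show ?case by (simp add: algebra_simps)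
  qed (simp add: beta_walk.Nil)
  then show ?thesis
  proof (induction s)
    case (Suc s)
    from beta_walk_append[OF short Suc.IH[OF Suc.prems]] show ?case by (simp add: algebra_simps)
  qed simp
qed

text \<open>L - i \<ge> n (n - 1) is a nonnegative combination of the cycle lengths n and n + 1.\<close>
lemma beta_walk_from_0:
  assumes n: "n \<ge> 1" and i: "i \<le> n" and L: "n * n \<le> L"
  shows "beta_walk n L 0 i"
proof -
  define q r where "q = (L - i) div n" and "r = (L - i) mod n"
  have "n * (n - 1) \<le> L - i" using n i L by (cases n) auto
  then have "n - 1 \<le> q" unfolding q_def using n by (metis div_le_mono nonzero_mult_div_cancel_left not_one_le_zero)
  moreover have "r < n" unfolding r_def using n by simp
  ultimately have "(q - r) * n + r * (n + 1) = L - i"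
    unfolding q_def r_def by (simp add: algebra_simps diff_mult_distrib)
  then have "beta_walk n (L - i) 0 0" using beta_walk_cycles[OF n, of "q - r" r] by simp
  from beta_walk_append[OF beta_walk_ascending[of 0 i n] this] have "beta_walk n (L - i + i) 0 i"
    using i by simp
  moreover have "i \<le> L" using i L le_square[of n] by linarith
  ultimately show ?thesis by simp
qed

lemma beta_prod_act_pos_of_walk:
  assumes ks: "\<forall>k\<in>set ks. k \<ge> 1" and z: "\<forall>i\<le>n. (0::real) \<le> z i" and a: "a \<le> n" "z a > 0"
  shows "beta_walk n (length ks) a b \<Longrightarrow> beta_prod_act n ks z b > 0"
  using ks
proof (induction ks arbitrary: b)
  case Nil then show ?case using a by (auto elim: beta_walk_0E)
next
  case (Cons k ks)
  obtain b' where w: "beta_walk n (length ks) a b'" and e: "beta_edge n b' b"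
    using Cons.prems(1) by (auto elim: beta_walk_SucE)
  let ?z = "beta_prod_act n ks z"
  have pos: "?z b' > 0" using Cons w by auto
  have nonneg: "\<forall>i\<le>n. 0 \<le> ?z i" using Cons.prems(2) z by (intro beta_prod_act_nonneg) auto
  have k: "of_int k \<ge> (1::real)" using Cons.prems(2) by simp
  from e consider "b' < n" "b = b' + 1" | "b' = n" "b = 0" | "b' = n - 1" "b = 0"
    unfolding beta_edge_def by auto
  then show ?case
  proof cases
    case 1
    then show ?thesis using pos by (simp add: beta_act_def)
  next
    case 2
    have "0 \<le> of_int k * ?z (n - 1)" using k nonneg by simp
    then show ?thesis using 2 pos by (simp add: beta_act_def)
  next
    case 3
    have "?z (n - 1) \<le> of_int k * ?z (n - 1)"
      using mult_right_mono[OF k nonneg[rule_format, of "n - 1"]] by simp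
    then show ?thesis using 3 pos nonneg[rule_format, of n] by (simp add: beta_act_def add_pos_nonneg)
  qed
qed

lemma beta_prod_nonneg_eigenvector_pos:
  assumes n: "n \<ge> 1" and ks: "\<forall>k\<in>set ks. k \<ge> 1" "ks \<noteq> []"
    and w: "\<forall>i\<le>n. (0::real) \<le> w i" and "\<rho> > 0"
    and ev: "\<forall>i\<le>n. beta_prod_act n ks w i = \<rho> * w i" and w0: "w 0 > 0"
  shows "\<forall>i\<le>n. w i > 0"
proof -
  let ?p = "length ks"
  have "w b > 0" if "beta_walk n (s * ?p) 0 b" for s b
    using that
  proof (induction s arbitrary: b)
    case 0 then show ?case using w0 by (auto elim: beta_walk_0E)
  next
    case (Suc s)
    then obtain b' where w1: "beta_walk n (s * ?p) 0 b'" and w2: "beta_walk n ?p b' b"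
      using beta_walk_split[of n "s * ?p" ?p 0 b] by (auto simp: add.commute)
    have "b' \<le> n" "b \<le> n" using beta_walk_le w1 w2 by blast+
    then have "beta_prod_act n ks w b > 0"
      using beta_prod_act_pos_of_walk[OF ks(1) w _ _ w2] Suc.IH[OF w1] by auto
    then show ?case using ev \<open>b \<le> n\<close> \<open>\<rho> > 0\<close> by (auto simp: zero_less_mult_iff)
  qed
  moreover have "1 \<le> ?p" using ks(2) by (cases ks) auto
  then have "n * n \<le> n * n * ?p" by simp
  ultimately show ?thesis using beta_walk_from_0[OF n] by blast
qed

text \<open>Subtracting the largest multiple \<open>t z\<close> that keeps \<open>v - t z\<close> nonnegative leaves a
  nonnegative eigenvector with a zero coordinate but positive first coordinate.\<close>
lemma beta_prod_eigenvector_nonpos: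
  assumes n: "n \<ge> 1" and ks: "\<forall>k\<in>set ks. k \<ge> 1" "ks \<noteq> []"
    and v: "\<forall>i\<le>n. (0::real) < v i" and "\<rho> > 0"
    and ev: "\<forall>i\<le>n. beta_prod_act n ks v i = \<rho> * v i"
    and ez: "\<forall>i\<le>n. beta_prod_act n ks z i = \<rho> * z i" and z0: "z 0 = 0"
  shows "\<forall>i\<le>n. z i \<le> 0"
proof (rule ccontr)
  define S where "S = {i. i \<le> n \<and> 0 < z i}"
  assume "\<not> (\<forall>i\<le>n. z i \<le> 0)"
  then have "S \<noteq> {}" unfolding S_def by force
  define t where "t = Min ((\<lambda>i. v i / z i) ` S)"
  have "t \<in> (\<lambda>i. v i / z i) ` S"
    unfolding t_def using \<open>S \<noteq> {}\<close> by (intro Min_in) (auto simp: S_def)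
  then obtain i2 where i2: "i2 \<in> S" "t = v i2 / z i2" by auto
  have t_le: "t \<le> v i / z i" if "i \<in> S" for i
    unfolding t_def using that by (simp add: S_def)
  have "t > 0" using i2 v unfolding S_def by auto
  define w where "w = (\<lambda>i. v i - t * z i)"
  have "0 \<le> w i" if "i \<le> n" for i
  proof (cases "i \<in> S")
    case True
    then show ?thesis using t_le[OF True] unfolding w_def S_def by (simp add: field_simps)
  next
    case False
    then have "t * z i \<le> 0" using that \<open>t > 0\<close> unfolding S_def by (simp add: mult_nonneg_nonpos)
    moreover have "0 < v i" using v that by simp
    ultimately show ?thesis unfolding w_def by linarith
  qed
  moreover have "\<forall>i\<le>n. beta_prod_act n ks w i = \<rho> * w i"
    unfolding w_def beta_prod_act_diff beta_prod_act_scale using ev ez by (simp add: algebra_simps)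
  moreover have "w 0 > 0" unfolding w_def using z0 v by simp
  ultimately have "w i2 > 0"
    using beta_prod_nonneg_eigenvector_pos[OF n ks _ \<open>\<rho> > 0\<close>] i2(1) unfolding S_def by auto
  moreover have "w i2 = 0" unfolding w_def i2(2) using i2(1) unfolding S_def by auto
  ultimately show False by simp
qed

lemma beta_prod_eigenvector_unique:
  assumes n: "n \<ge> 1" and ks: "\<forall>k\<in>set ks. k \<ge> 1" "ks \<noteq> []"
    and v: "\<forall>i\<le>n. (0::real) < v i" "v 0 = 1" and "\<rho> > 0"
    and ev: "\<forall>i\<le>n. beta_prod_act n ks v i = \<rho> * v i"
    and eu: "\<forall>i\<le>n. beta_prod_act n ks u i = \<rho> * u i"
  shows "\<forall>i\<le>n. u i = u 0 * v i"
proof -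
  define z where "z = (\<lambda>i. u i - u 0 * v i)"
  have ez: "\<forall>i\<le>n. beta_prod_act n ks z i = \<rho> * z i"
    unfolding z_def beta_prod_act_diff beta_prod_act_scale using ev eu by (simp add: algebra_simps)
  have "\<forall>i\<le>n. beta_prod_act n ks (\<lambda>i. - 1 * z i) i = \<rho> * (- 1 * z i)"
    unfolding beta_prod_act_scale using ez by simp
  then have "\<forall>i\<le>n. - 1 * z i \<le> 0"
    by (rule beta_prod_eigenvector_nonpos[OF n ks v(1) \<open>\<rho> > 0\<close> ev]) (simp add: z_def v(2))
  moreover have "\<forall>i\<le>n. z i \<le> 0"
    by (rule beta_prod_eigenvector_nonpos[OF n ks v(1) \<open>\<rho> > 0\<close> ev ez]) (simp add: z_def v(2))
  ultimately show ?thesis unfolding z_def by force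
qed

lemma beta_prod_positive_eigenvector_mem:
  fixes v :: "nat \<Rightarrow> real"
  assumes K: "subfield_set K" and n: "n \<ge> 1" and ks: "\<forall>k\<in>set ks. k \<ge> 1" "ks \<noteq> []"
    and v: "\<forall>i\<le>n. 0 < v i" "v 0 = 1" and \<rho>: "\<rho> > 0" "\<rho> \<in> K"
    and ev: "\<forall>i\<le>n. beta_prod_act n ks v i = \<rho> * v i"
  shows "\<forall>i\<le>n. v i \<in> K"
proof -
  interpret subfield_set K by fact
  obtain u where u: "range u \<subseteq> K" "u 0 = 1"
    and "\<forall>i\<le>n. (\<Sum>j\<le>n. of_int (beta_prod n ks $$ (i, j)) * u j) = \<rho> * u i"
    using eigenvector_in_subfield[of n "\<lambda>i j. of_int (beta_prod n ks $$ (i, j))" \<rho> v]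
      \<rho>(2) ev v(2) by (auto simp: beta_prod_act_eq_sum[OF n] of_int_mem)
  then have "\<forall>i\<le>n. beta_prod_act n ks u i = \<rho> * u i"
    by (simp add: beta_prod_act_eq_sum[OF n])
  from beta_prod_eigenvector_unique[OF n ks v \<rho>(1) ev this] have "\<forall>i\<le>n. v i = u i"
    using u(2) by simp
  then show ?thesis using u(1) by (simp add: image_subset_iff)
qed

section \<open>The Selmer map in homogeneous coordinates\<close>

definition hom_coords :: "nat \<Rightarrow> (nat \<Rightarrow> real) \<Rightarrow> nat \<Rightarrow> real" where
  "hom_coords n y i = (if i = 0 then 1 else if i \<le> n then y i else 0)"

definition selmer_digits :: "nat \<Rightarrow> (nat \<Rightarrow> real) \<Rightarrow> nat \<Rightarrow> nat \<Rightarrow> int list" where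
  "selmer_digits n x a q = map (\<lambda>j. selmer_digit n ((selmer n ^^ j) x)) [a..<a + q]"

lemma selmer_digits_0 [simp]: "selmer_digits n x a 0 = []"
  by (simp add: selmer_digits_def)

lemma selmer_digits_Suc:
  "selmer_digits n x a (Suc q) = selmer_digit n ((selmer n ^^ a) x) # selmer_digits n x (Suc a) q"
  by (simp add: selmer_digits_def upt_conv_Cons del: upt_Suc)

lemma period_mat_eq_beta_prod: "period_mat n x m p = beta_prod n (selmer_digits n x m p)"
proof -
  have shift: "[m + 1..<m + p + 1] = map Suc [m..<m + p]" by (simp only: map_Suc_upt) simp
  show ?thesis
    unfolding period_mat_def beta_prod_def selmer_digits_def shift foldr_map comp_def by simp
qed

lemma in_B_antimono:
  assumes "in_B n y" "1 \<le> i" "i \<le> j" "j \<le> n"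
  shows "y j \<le> y i"
  using assms(3,4)
proof (induction j rule: dec_induct)
  case (step j)
  then have "y (j + 1) \<le> y j" using assms(1,2) unfolding in_B_def by auto
  with step show ?case by simp
qed simp

lemma hom_coords_pos:
  assumes "in_B n y" "y n > 0" "i \<le> n"
  shows "hom_coords n y i > 0"
  using assms in_B_antimono[OF assms(1), of i n] by (auto simp: hom_coords_def)

lemma selmer_digit_bounds:
  assumes "y n > 0"
  shows "of_int (selmer_digit n y) * y n \<le> 1" "1 < (of_int (selmer_digit n y) + 1) * y n"
proof -
  have "of_int (selmer_digit n y) \<le> 1 / y n" "1 / y n < of_int (selmer_digit n y) + 1"
    unfolding selmer_digit_def by linarith+
  then show "of_int (selmer_digit n y) * y n \<le> 1" "1 < (of_int (selmer_digit n y) + 1) * y n"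
    using assms by (simp_all add: field_simps)
qed

lemma selmer_digit_ge_1:
  assumes "n \<ge> 1" "in_B n y" "y n > 0"
  shows "selmer_digit n y \<ge> 1"
proof -
  have "y n \<le> 1" using in_B_antimono[OF assms(2), of 1 n] assms unfolding in_B_def by auto
  then have "1 \<le> 1 / y n" using assms(3) by simp
  then show ?thesis unfolding selmer_digit_def by linarith
qed

lemma selmer_in_B:
  assumes n: "n \<ge> 1" and B: "in_B n y" and pos: "y n > 0"
  shows "in_B n (selmer n y)"
proof -
  define k where "k = selmer_digit n y"
  have y1: "y 1 > 0" using hom_coords_pos[OF B pos, of 1] n by (simp add: hom_coords_def)
  have "0 \<le> 1 - of_int k * y n" "1 - of_int k * y n \<le> y n"
    using selmer_digit_bounds[of y n] pos unfolding k_def by (auto simp: algebra_simps)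
  then have last: "0 \<le> selmer n y n" "selmer n y n \<le> y n / y 1"
    using y1 by (simp_all add: selmer_def k_def divide_right_mono)
  have inner: "selmer n y i = y (i + 1) / y 1" if "1 \<le> i" "i < n" for i
    using that by (simp add: selmer_def)
  have step: "selmer n y (i + 1) \<le> selmer n y i" if "1 \<le> i" "i < n" for i
  proof (cases "i + 1 = n")
    case True
    then show ?thesis using last inner[OF that] by simp
  next
    case False
    then show ?thesis
      using inner[of i] inner[of "i + 1"] that y1 in_B_antimono[OF B, of "i + 1" "i + 2"]
      by (simp add: divide_right_mono)
  qed
  have "selmer n y 1 \<le> 1"
  proof (cases "n = 1")
    case True
    then show ?thesis using last y1 by simp
  next
    case False
    then show ?thesis using inner[of 1] n y1 in_B_antimono[OF B, of 1 2] by (simp add: numeral_2_eq_2)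
  qed
  then show ?thesis using last step n unfolding in_B_def by auto
qed

lemma hom_coords_selmer:
  assumes n: "n \<ge> 1" and y1: "y 1 \<noteq> 0"
  shows "hom_coords n y = (\<lambda>i. y 1 * beta_act n (of_int (selmer_digit n y)) (hom_coords n (selmer n y)) i)"
proof
  fix i
  show "hom_coords n y i = y 1 * beta_act n (of_int (selmer_digit n y)) (hom_coords n (selmer n y)) i"
  proof (cases "i = 0")
    case True
    then show ?thesis
      using n y1 by (cases "n = 1") (auto simp: beta_act_def hom_coords_def selmer_def field_simps)
  next
    case False
    then show ?thesis
      using y1 by (cases "i = 1") (auto simp: beta_act_def hom_coords_def selmer_def)
  qed
qed

context
  fixes n :: nat and x :: "nat \<Rightarrow> real"
  assumes n: "n \<ge> 1" and B: "in_B n x" and pos: "\<forall>j. (selmer n ^^ j) x n > 0"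
begin

lemma iter_selmer_in_B: "in_B n ((selmer n ^^ j) x)"
  by (induction j) (use B selmer_in_B[OF n] pos in auto)

lemma hom_coords_iter_selmer_pos: "i \<le> n \<Longrightarrow> hom_coords n ((selmer n ^^ j) x) i > 0"
  using hom_coords_pos[OF iter_selmer_in_B] pos by blast

lemma selmer_digits_ge_1: "\<forall>k\<in>set (selmer_digits n x a q). k \<ge> 1"
  using selmer_digit_ge_1[OF n iter_selmer_in_B] pos by (auto simp: selmer_digits_def)

lemma hom_coords_iter_selmer:
  "\<exists>c>0. hom_coords n ((selmer n ^^ a) x)
     = (\<lambda>i. c * beta_prod_act n (selmer_digits n x a q) (hom_coords n ((selmer n ^^ (a + q)) x)) i)"
proof (induction q arbitrary: a)
  case 0
  show ?case by (intro exI[of _ 1]) simp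
next
  case (Suc q)
  let ?y = "(selmer n ^^ a) x"
  obtain c where "c > 0" and IH: "hom_coords n ((selmer n ^^ Suc a) x)
      = (\<lambda>i. c * beta_prod_act n (selmer_digits n x (Suc a) q) (hom_coords n ((selmer n ^^ (Suc a + q)) x)) i)"
    using Suc.IH by blast
  have y1: "?y 1 > 0"
    using hom_coords_iter_selmer_pos[of 1 a] n by (simp add: hom_coords_def)
  have "hom_coords n ?y = (\<lambda>i. ?y 1 * beta_act n (of_int (selmer_digit n ?y)) (hom_coords n ((selmer n ^^ Suc a) x)) i)"
    using hom_coords_selmer[OF n, of ?y] y1 by simp
  also have "\<dots> = (\<lambda>i. ?y 1 * c * beta_prod_act n (selmer_digits n x a (Suc q)) (hom_coords n ((selmer n ^^ (a + Suc q)) x)) i)"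
    unfolding IH by (simp add: selmer_digits_Suc beta_prod_act_scale beta_act_scale mult.assoc)
  finally show ?case using \<open>c > 0\<close> y1 by (intro exI[of _ "?y 1 * c"]) simp
qed

lemma periodic_hom_coords_eigenvector:
  assumes "\<forall>i\<in>{1..n}. (selmer n ^^ (m + p)) x i = (selmer n ^^ m) x i"
  obtains \<rho> where "\<rho> > 0"
    "\<forall>i\<le>n. beta_prod_act n (selmer_digits n x m p) (hom_coords n ((selmer n ^^ m) x)) i
       = \<rho> * hom_coords n ((selmer n ^^ m) x) i"
proof -
  define v where "v = hom_coords n ((selmer n ^^ m) x)"
  obtain c where "c > 0" and c: "v = (\<lambda>i. c * beta_prod_act n (selmer_digits n x m p)
      (hom_coords n ((selmer n ^^ (m + p)) x)) i)"
    using hom_coords_iter_selmer unfolding v_def by blast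
  moreover have "hom_coords n ((selmer n ^^ (m + p)) x) = v"
    using assms unfolding v_def by (auto simp: hom_coords_def)
  ultimately have "v = (\<lambda>i. c * beta_prod_act n (selmer_digits n x m p) v i)"
    by simp
  from fun_cong[OF this] have "v i = c * beta_prod_act n (selmer_digits n x m p) v i" for i .
  then have "beta_prod_act n (selmer_digits n x m p) v i = 1 / c * v i" for i
    using \<open>c > 0\<close> by (simp add: field_simps)
  with \<open>c > 0\<close> show thesis by (intro that[of "1 / c"]) (simp_all add: v_def)
qed

lemma mem_of_iter_selmer_mem:
  assumes K: "subfield_set K" and v: "\<forall>i\<le>n. hom_coords n ((selmer n ^^ m) x) i \<in> K"
  shows "\<forall>i\<in>{1..n}. x i \<in> K"
proof -
  interpret subfield_set K by fact
  define G where "G = beta_prod_act n (selmer_digits n x 0 m) (hom_coords n ((selmer n ^^ m) x))"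
  have "\<exists>c>0. hom_coords n x = (\<lambda>i. c * G i)"
    using hom_coords_iter_selmer[of 0 m] unfolding G_def by simp
  then obtain c where "c > 0" and c: "hom_coords n x = (\<lambda>i. c * G i)" by blast
  have "G 0 = 1 / c" using fun_cong[OF c, of 0] \<open>c > 0\<close> by (simp add: hom_coords_def field_simps)
  moreover have "x i = c * G i" if "i \<in> {1..n}" for i
    using fun_cong[OF c, of i] that by (simp add: hom_coords_def)
  ultimately have "x i = G i / G 0" if "i \<in> {1..n}" for i
    using that by simp
  moreover have "\<forall>i\<le>n. G i \<in> K" unfolding G_def using v by (rule beta_prod_act_mem)
  ultimately show ?thesis using divide_mem by auto
qed

end

theorem mainTheorem6:
  fixes n m p :: nat and x :: "nat \<Rightarrow> real" and \<rho>\<^sub>0 :: real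
  assumes "n \<ge> 1"
    and "in_B n x"
    and "\<forall>j. (selmer n ^^ j) x n > 0"
    and "p \<ge> 1"
    and "\<forall>i\<in>{1..n}. (selmer n ^^ (m + p)) x i = (selmer n ^^ m) x i"
    and "\<rho>\<^sub>0 = spectral_radius (map_mat of_int (period_mat n x m p))"
  shows "(\<forall>i\<in>{1..n}. \<exists>P Q :: rat poly. poly (map_poly of_rat Q) \<rho>\<^sub>0 \<noteq> 0 \<and>
            x i = poly (map_poly of_rat P) \<rho>\<^sub>0 / poly (map_poly of_rat Q) \<rho>\<^sub>0)
       \<and> (\<exists>q :: rat poly. q \<noteq> 0 \<and> degree q \<le> n + 1 \<and> poly (map_poly of_rat q) \<rho>\<^sub>0 = 0)"
proof -
  note n = assms(1) and orbit = assms(1-3)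
  define ks where "ks = selmer_digits n x m p"
  define v where "v = hom_coords n ((selmer n ^^ m) x)"
  have ks: "\<forall>k\<in>set ks. k \<ge> 1" "ks \<noteq> []"
    unfolding ks_def using selmer_digits_ge_1[OF orbit] assms(4) by (auto simp: selmer_digits_def)
  have v: "\<forall>i\<le>n. v i > 0" "v 0 = 1"
    unfolding v_def using hom_coords_iter_selmer_pos[OF orbit] by (simp_all add: hom_coords_def)
  obtain \<rho> where "\<rho> > 0" and ev: "\<forall>i\<le>n. beta_prod_act n ks v i = \<rho> * v i"
    by (rule periodic_hom_coords_eigenvector[OF orbit assms(5), folded ks_def v_def])
  have "\<forall>k\<in>set ks. k \<ge> 0" using ks(1) by force
  from spectral_radius_beta_prod[OF n this v(1) _ ev] \<open>\<rho> > 0\<close> have spectral: "\<rho>\<^sub>0 = \<rho>"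
    unfolding assms(6) period_mat_eq_beta_prod ks_def by simp
  have "\<forall>i\<le>n. v i \<in> rat_adjoin \<rho>"
    using beta_prod_positive_eigenvector_mem[OF subfield_set_rat_adjoin n ks v \<open>\<rho> > 0\<close> rat_adjoin_self ev] .
  then have "\<forall>i\<in>{1..n}. x i \<in> rat_adjoin \<rho>"
    by (rule mem_of_iter_selmer_mem[OF orbit subfield_set_rat_adjoin, where m = m, folded v_def])
  moreover have "\<exists>q :: rat poly. q \<noteq> 0 \<and> degree q \<le> n + 1 \<and> poly (map_poly of_rat q) \<rho> = 0"
    using beta_prod_eigenvalue_rat_root[OF n ev] v(2) by simp
  ultimately show ?thesis unfolding spectral mem_rat_adjoin_iff by blast
qed

end
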